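(* Let $G$ be a finite simple undirected graph and let $r<s$ be positive integers. Let $\mathcal{F}$ be the family of all $k$-$(r,s)$-nuclei of $G$, taken over all positive integers $k$ (each nucleus regarded as a set of $s$-cliques of $G$). Then $\mathcal{F}$ is a laminar family: for any $\mathcal{S},\mathcal{S}'\in\mathcal{F}$, the intersection $\mathcal{S}\cap\mathcal{S}'$ is either empty, or $\mathcal{S}\subseteq\mathcal{S}'$, or $\mathcal{S}'\subseteq\mathcal{S}$.
   Context: A $K_r$ denotes an $r$-clique (a set of $r$ pairwise adjacent vertices) of $G$. For a set $\mathcal{S}$ of $K_s$s of $G$ (with $r<s$): $K_r(\mathcal{S})$ is the set of $K_r$s contained in some $S\in\mathcal{S}$; the $\mathcal{S}$-degree of $R\in K_r(\mathcal{S})$ is the number of $S\in\mathcal{S}$ with $R\subseteq S$; two $K_r$s $R,R'$ are $\mathcal{S}$-connected if there is a sequence $R=R_1,R_2,\dots,R_m=R'$ in $K_r(\mathcal{S})$ such that for each $i$ some $S\in\mathcal{S}$ contains $R_i\cup R_{i+1}$. For positive integers $k$ and $r<s$, a $k$-$(r,s)$-nucleus is a set $\mathcal{S}$ of $K_s$s of $G$ that is maximal (under inclusion) among sets of $K_s$s satisfying: (i) every $R\in K_r(\mathcal{S})$ has $\mathcal{S}$-degree at least $k$; (ii) any $R,R'\in K_r(\mathcal{S})$ are $\mathcal{S}$-connected. *)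

theory Defs
  imports Main
begin

definition simple_graph :: "'a set \<Rightarrow> ('a \<Rightarrow> 'a \<Rightarrow> bool) \<Rightarrow> bool" where
  "simple_graph V E \<longleftrightarrow> finite V \<and> (\<forall>x y. E x y \<longrightarrow> x \<in> V \<and> y \<in> V)
     \<and> (\<forall>x y. E x y \<longrightarrow> E y x) \<and> (\<forall>x. \<not> E x x)"

definition is_clique :: "'a set \<Rightarrow> ('a \<Rightarrow> 'a \<Rightarrow> bool) \<Rightarrow> nat \<Rightarrow> 'a set \<Rightarrow> bool" where
  "is_clique V E r C \<longleftrightarrow> C \<subseteq> V \<and> card C = r \<and> (\<forall>x\<in>C. \<forall>y\<in>C. x \<noteq> y \<longrightarrow> E x y)"

definition Kr_of :: "'a set \<Rightarrow> ('a \<Rightarrow> 'a \<Rightarrow> bool) \<Rightarrow> nat \<Rightarrow> 'a set set \<Rightarrow> 'a set set" where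
  "Kr_of V E r \<S> = {R. is_clique V E r R \<and> (\<exists>S\<in>\<S>. R \<subseteq> S)}"

definition S_degree :: "'a set set \<Rightarrow> 'a set \<Rightarrow> nat" where
  "S_degree \<S> R = card {S\<in>\<S>. R \<subseteq> S}"

definition S_connected :: "'a set \<Rightarrow> ('a \<Rightarrow> 'a \<Rightarrow> bool) \<Rightarrow> nat \<Rightarrow> 'a set set \<Rightarrow> 'a set \<Rightarrow> 'a set \<Rightarrow> bool" where
  "S_connected V E r \<S> R R' \<longleftrightarrow>
     (\<exists>xs. xs \<noteq> [] \<and> hd xs = R \<and> last xs = R' \<and> set xs \<subseteq> Kr_of V E r \<S> \<and>
        (\<forall>i. i + 1 < length xs \<longrightarrow> (\<exists>S\<in>\<S>. xs ! i \<union> xs ! (i + 1) \<subseteq> S)))"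

definition nucleus_prop :: "'a set \<Rightarrow> ('a \<Rightarrow> 'a \<Rightarrow> bool) \<Rightarrow> nat \<Rightarrow> nat \<Rightarrow> nat \<Rightarrow> 'a set set \<Rightarrow> bool" where
  "nucleus_prop V E k r s \<S> \<longleftrightarrow>
     (\<forall>S\<in>\<S>. is_clique V E s S) \<and>
     (\<forall>R\<in>Kr_of V E r \<S>. k \<le> S_degree \<S> R) \<and>
     (\<forall>R\<in>Kr_of V E r \<S>. \<forall>R'\<in>Kr_of V E r \<S>. S_connected V E r \<S> R R')"

definition nucleus :: "'a set \<Rightarrow> ('a \<Rightarrow> 'a \<Rightarrow> bool) \<Rightarrow> nat \<Rightarrow> nat \<Rightarrow> nat \<Rightarrow> 'a set set \<Rightarrow> bool" where
  "nucleus V E k r s \<S> \<longleftrightarrow> nucleus_prop V E k r s \<S> \<and>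
     (\<forall>\<T>. nucleus_prop V E k r s \<T> \<and> \<S> \<subseteq> \<T> \<longrightarrow> \<T> = \<S>)"

end

theory Submission
  imports Defs
begin

text \<open>If two nuclei \<open>\<S>\<close> (at level \<open>k\<close>) and \<open>\<S>'\<close> (at level \<open>k' \<ge> k\<close>) share an
  s-clique \<open>T\<close>, then \<open>\<S> \<union> \<S>'\<close> still has all degrees at least \<open>k\<close>, and it is connected
  because every r-clique of either part is connected to an r-clique inside \<open>T\<close>.
  Maximality of \<open>\<S>\<close> then forces \<open>\<S>' \<subseteq> \<S>\<close>.\<close>

lemma Kr_of_mono: "\<A> \<subseteq> \<B> \<Longrightarrow> Kr_of V E r \<A> \<subseteq> Kr_of V E r \<B>"
  unfolding Kr_of_def by blast

lemma Kr_of_Un: "Kr_of V E r (\<A> \<union> \<B>) = Kr_of V E r \<A> \<union> Kr_of V E r \<B>"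
  unfolding Kr_of_def by blast

lemma S_degree_mono:
  assumes "finite \<B>" "\<A> \<subseteq> \<B>"
  shows "S_degree \<A> R \<le> S_degree \<B> R"
  unfolding S_degree_def by (rule card_mono) (use assms in auto)

lemma finite_clique_family:
  assumes "finite V" "\<forall>S\<in>\<A>. is_clique V E s S"
  shows "finite \<A>"
proof (rule finite_subset)
  show "\<A> \<subseteq> Pow V" using assms(2) unfolding is_clique_def by blast
qed (use assms(1) in simp)

lemma clique_contains_smaller_clique:
  assumes "is_clique V E s T" "r \<le> s"
  obtains R where "R \<subseteq> T" "is_clique V E r R"
proof -
  obtain R where "R \<subseteq> T" "card R = r"
    using obtain_subset_with_card_n[of r T] assms unfolding is_clique_def by auto
  with assms(1) show ?thesis using that unfolding is_clique_def by blast
qed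

lemma S_connected_mono:
  assumes "S_connected V E r \<A> R R'" "\<A> \<subseteq> \<B>"
  shows "S_connected V E r \<B> R R'"
proof -
  obtain xs where xs: "xs \<noteq> []" "hd xs = R" "last xs = R'" "set xs \<subseteq> Kr_of V E r \<A>"
    "\<forall>i. i + 1 < length xs \<longrightarrow> (\<exists>S\<in>\<A>. xs ! i \<union> xs ! (i + 1) \<subseteq> S)"
    using assms(1) unfolding S_connected_def by blast
  have "set xs \<subseteq> Kr_of V E r \<B>" using xs(4) Kr_of_mono[OF assms(2)] by (rule subset_trans)
  moreover have "\<forall>i. i + 1 < length xs \<longrightarrow> (\<exists>S\<in>\<B>. xs ! i \<union> xs ! (i + 1) \<subseteq> S)"
    using xs(5) assms(2) by blast
  ultimately show ?thesis using xs(1-3) unfolding S_connected_def by blast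
qed

lemma S_connected_trans:
  assumes "S_connected V E r \<A> R R'" "S_connected V E r \<A> R' R''"
  shows "S_connected V E r \<A> R R''"
proof -
  obtain xs where xs: "xs \<noteq> []" "hd xs = R" "last xs = R'" "set xs \<subseteq> Kr_of V E r \<A>"
    "\<forall>i. i + 1 < length xs \<longrightarrow> (\<exists>S\<in>\<A>. xs ! i \<union> xs ! (i + 1) \<subseteq> S)"
    using assms(1) unfolding S_connected_def by blast
  obtain ys where ys: "ys \<noteq> []" "hd ys = R'" "last ys = R''" "set ys \<subseteq> Kr_of V E r \<A>"
    "\<forall>i. i + 1 < length ys \<longrightarrow> (\<exists>S\<in>\<A>. ys ! i \<union> ys ! (i + 1) \<subseteq> S)"
    using assms(2) unfolding S_connected_def by blast
  have "R' \<in> Kr_of V E r \<A>" using ys(1,2,4) by auto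
  then obtain S' where S': "S' \<in> \<A>" "R' \<subseteq> S'" unfolding Kr_of_def by blast
  have steps: "\<exists>S\<in>\<A>. (xs @ ys) ! i \<union> (xs @ ys) ! (i + 1) \<subseteq> S"
    if i: "i + 1 < length (xs @ ys)" for i
  proof -
    consider "i + 1 < length xs" | "i + 1 = length xs" | "length xs \<le> i" by linarith
    then show ?thesis
    proof cases
      case 1
      then show ?thesis using xs(5) by (simp add: nth_append)
    next
      case 2
      \<comment> \<open>the junction step repeats \<open>R'\<close>, which lies in the clique \<open>S'\<close>\<close>
      then have "i = length xs - 1" by simp
      then have "(xs @ ys) ! i = R'" "(xs @ ys) ! (i + 1) = R'"
        using 2 xs(1,3) ys(1,2) by (simp_all add: nth_append last_conv_nth hd_conv_nth)
      then show ?thesis using S' by auto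
    next
      case 3
      then have "i - length xs + 1 < length ys" "i + 1 - length xs = i - length xs + 1"
        using i by auto
      then show ?thesis using ys(5) 3 by (auto simp: nth_append)
    qed
  qed
  show ?thesis
    unfolding S_connected_def using xs ys steps by (intro exI[of _ "xs @ ys"]) auto
qed

lemma nucleus_prop_Un:
  assumes "finite V" "r \<le> s" "k \<le> k'"
    and P: "nucleus_prop V E k r s \<A>" and P': "nucleus_prop V E k' r s \<B>"
    and T: "T \<in> \<A>" "T \<in> \<B>"
  shows "nucleus_prop V E k r s (\<A> \<union> \<B>)"
proof -
  have cliques: "\<forall>S\<in>\<A> \<union> \<B>. is_clique V E s S"
    using P P' unfolding nucleus_prop_def by auto
  then have fin: "finite (\<A> \<union> \<B>)" using \<open>finite V\<close> by (rule finite_clique_family[rotated])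
  have degree: "k \<le> S_degree (\<A> \<union> \<B>) R" if "R \<in> Kr_of V E r (\<A> \<union> \<B>)" for R
  proof (cases "R \<in> Kr_of V E r \<A>")
    case True
    then have "k \<le> S_degree \<A> R" using P unfolding nucleus_prop_def by auto
    also have "\<dots> \<le> S_degree (\<A> \<union> \<B>) R" using fin by (rule S_degree_mono) simp
    finally show ?thesis .
  next
    case False
    then have "R \<in> Kr_of V E r \<B>" using that unfolding Kr_of_Un by simp
    then have "k' \<le> S_degree \<B> R" using P' unfolding nucleus_prop_def by auto
    also have "\<dots> \<le> S_degree (\<A> \<union> \<B>) R" using fin by (rule S_degree_mono) simp
    finally show ?thesis using \<open>k \<le> k'\<close> by simp
  qed
  have "is_clique V E s T" using cliques T by simp
  then obtain R0 where "R0 \<subseteq> T" "is_clique V E r R0"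
    using \<open>r \<le> s\<close> by (rule clique_contains_smaller_clique)
  then have R0: "R0 \<in> Kr_of V E r \<A>" "R0 \<in> Kr_of V E r \<B>"
    using T unfolding Kr_of_def by auto
  have within_A: "S_connected V E r (\<A> \<union> \<B>) R R'"
    if "R \<in> Kr_of V E r \<A>" "R' \<in> Kr_of V E r \<A>" for R R'
  proof (rule S_connected_mono)
    show "S_connected V E r \<A> R R'" using P that unfolding nucleus_prop_def by auto
  qed simp
  have within_B: "S_connected V E r (\<A> \<union> \<B>) R R'"
    if "R \<in> Kr_of V E r \<B>" "R' \<in> Kr_of V E r \<B>" for R R'
  proof (rule S_connected_mono)
    show "S_connected V E r \<B> R R'" using P' that unfolding nucleus_prop_def by auto
  qed simp
  have connected: "S_connected V E r (\<A> \<union> \<B>) R R'"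
    if "R \<in> Kr_of V E r (\<A> \<union> \<B>)" "R' \<in> Kr_of V E r (\<A> \<union> \<B>)" for R R'
  proof (rule S_connected_trans)
    show "S_connected V E r (\<A> \<union> \<B>) R R0"
      using that(1) R0 within_A within_B unfolding Kr_of_Un by auto
    show "S_connected V E r (\<A> \<union> \<B>) R0 R'"
      using that(2) R0 within_A within_B unfolding Kr_of_Un by auto
  qed
  show ?thesis
    unfolding nucleus_prop_def using cliques degree connected by simp
qed

lemma nucleus_absorbs_higher_nucleus:
  assumes "finite V" "r \<le> s" "k \<le> k'"
    and N: "nucleus V E k r s \<A>" and N': "nucleus V E k' r s \<B>"
    and "\<A> \<inter> \<B> \<noteq> {}"
  shows "\<B> \<subseteq> \<A>"
proof -
  obtain T where T: "T \<in> \<A>" "T \<in> \<B>" using \<open>\<A> \<inter> \<B> \<noteq> {}\<close> by blast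
  have P: "nucleus_prop V E k r s \<A>" and P': "nucleus_prop V E k' r s \<B>"
    using N N' unfolding nucleus_def by simp_all
  have "nucleus_prop V E k r s (\<A> \<union> \<B>)"
    using assms(1-3) P P' T by (rule nucleus_prop_Un)
  then have "\<A> \<union> \<B> = \<A>" using N unfolding nucleus_def by simp
  then show ?thesis by blast
qed

theorem lemma1:
  fixes V :: "'a set" and E :: "'a \<Rightarrow> 'a \<Rightarrow> bool" and r s :: nat
  assumes "simple_graph V E" and "0 < r" and "r < s"
  shows "\<forall>k k' \<S> \<S>'. 0 < k \<and> 0 < k' \<and> nucleus V E k r s \<S> \<and> nucleus V E k' r s \<S>' \<longrightarrow>
           \<S> \<inter> \<S>' = {} \<or> \<S> \<subseteq> \<S>' \<or> \<S>' \<subseteq> \<S>"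
proof (intro allI impI)
  fix k k' \<S> \<S>'
  assume "0 < k \<and> 0 < k' \<and> nucleus V E k r s \<S> \<and> nucleus V E k' r s \<S>'"
  then have N: "nucleus V E k r s \<S>" "nucleus V E k' r s \<S>'" by simp_all
  have V: "finite V" using \<open>simple_graph V E\<close> unfolding simple_graph_def by simp
  have rs: "r \<le> s" using \<open>r < s\<close> by simp
  show "\<S> \<inter> \<S>' = {} \<or> \<S> \<subseteq> \<S>' \<or> \<S>' \<subseteq> \<S>"
  proof (cases "k \<le> k'")
    case True
    then show ?thesis using nucleus_absorbs_higher_nucleus[OF V rs True N] by blast
  next
    case False
    then have "k' \<le> k" by simp
    then show ?thesis
      using nucleus_absorbs_higher_nucleus[OF V rs _ N(2) N(1)] by (auto simp: Int_commute)
  qed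
qed

end
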